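(* Let $M^Q(a|x)$ and $N^{Q'}(b|y)$ be PMDs. Then $M^Q(a|x)\succeq N^{Q'}(b|y)$ if and only if $M^Q(a|x)$ can be converted to $N^{Q'}(b|y)$ by a one-way LOCC from Alice to Bob, in the spatial model in which the PMD is regarded as a bipartite channel whose quantum input is held by Alice and whose program input and classical outcome are held by Bob.
   Context: All Hilbert spaces are finite-dimensional and all alphabets are finite. A PMD on $\mathcal{H}^Q$ with program set $\mathcal{X}$ and outcome set $\mathcal{A}$ is a family $\{M^Q(a|x)\}$ of operators on $\mathcal{H}^Q$ with $M^Q(a|x)\ge0$ and $\sum_a M^Q(a|x)=\mathbb{1}^Q$ for every $x$. In the spatial model, such a PMD is a bipartite channel: Alice inputs a quantum state on $\mathcal{H}^Q$, Bob inputs $x$ and receives $a$ with probability $\mathrm{Tr}[\rho M^Q(a|x)]$. A one-way LOCC conversion from Alice to Bob of $M^Q(a|x)$ into a device with Alice's quantum input $\mathcal{H}^{Q'}$, Bob's input $y$ and Bob's output $b$ consists of: a pre-processing by one-way LOCC (Alice to Bob) acting on Alice's input in $\mathcal{H}^{Q'}$ and Bob's input $y$, producing the input on $\mathcal{H}^Q$ for Alice's side of $M$ and the program $x$ on Bob's side; side memories that may be quantum on Alice's side and classical on Bob's side; and a post-processing by one-way LOCC (Alice to Bob) using the side memories and Bob's outcome $a$ to produce $b$; shared randomness is allowed. $M^Q(a|x)\succeq N^{Q'}(b|y)$ means that there exist a probability distribution $\mu(r)$, for each $r$ a quantum instrument $\{\mathcal{E}^{Q'\to Q}_{i|r}\}_i$,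 and conditional probability distributions $p(x|i,y,r)$, $q(b|a,x,i,y,r)$ such that for all $b,y$ \[N^{Q'}(b|y)=\sum_r\mu(r)\sum_{i,x,a}q(b|a,x,i,y,r)\,p(x|i,y,r)\,(\mathcal{E}^{Q'\to Q}_{i|r})^\dagger[M^Q(a|x)],\] with $\mathcal{E}^\dagger$ the adjoint (trace-dual) map. *)

theory Defs
  imports "Jordan_Normal_Form.Schur_Decomposition"
begin

definition msum :: "nat \<Rightarrow> nat \<Rightarrow> ('i \<Rightarrow> complex mat) \<Rightarrow> 'i set \<Rightarrow> complex mat" where
  "msum d1 d2 f S = mat d1 d2 (\<lambda>(u,v). \<Sum>s\<in>S. f s $$ (u,v))"

definition mtr :: "complex mat \<Rightarrow> complex" where
  "mtr A = (\<Sum>u<dim_row A. A $$ (u,u))"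

definition kron :: "complex mat \<Rightarrow> complex mat \<Rightarrow> complex mat" where
  "kron A B = mat (dim_row A * dim_row B) (dim_col A * dim_col B)
     (\<lambda>(u,v). A $$ (u div dim_row B, v div dim_col B) * B $$ (u mod dim_row B, v mod dim_col B))"

definition psd :: "nat \<Rightarrow> complex mat \<Rightarrow> bool" where
  "psd d A \<longleftrightarrow> A \<in> carrier_mat d d \<and>
     (\<forall>v \<in> carrier_vec d. Im ((A *\<^sub>v v) \<bullet>c v) = 0 \<and> Re ((A *\<^sub>v v) \<bullet>c v) \<ge> 0)"

definition density :: "nat \<Rightarrow> complex mat \<Rightarrow> bool" where
  "density d \<rho> \<longleftrightarrow> psd d \<rho> \<and> mtr \<rho> = 1"

definition povm :: "nat \<Rightarrow> ('i \<Rightarrow> complex mat) \<Rightarrow> 'i set \<Rightarrow> bool" where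
  "povm d F S \<longleftrightarrow> (\<forall>s\<in>S. psd d (F s)) \<and> msum d d F S = 1\<^sub>m d"

text \<open>PMD on C^d: M x a is the operator M(a|x); program set 'x, outcome set 'a (finite types).\<close>
definition pmd :: "nat \<Rightarrow> ('x::finite \<Rightarrow> 'a::finite \<Rightarrow> complex mat) \<Rightarrow> bool" where
  "pmd d M \<longleftrightarrow> (\<forall>x. povm d (M x) UNIV)"

definition distr :: "('i \<Rightarrow> real) \<Rightarrow> 'i set \<Rightarrow> bool" where
  "distr p S \<longleftrightarrow> (\<forall>s\<in>S. p s \<ge> 0) \<and> (\<Sum>s\<in>S. p s) = 1"

text \<open>An instrument from C^din to C^dout with outcomes i < nI; the CP map of outcome i
  has Kraus operators K i k, k < nK (dout x din matrices); the sum is trace preserving.\<close>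
definition instrument :: "nat \<Rightarrow> nat \<Rightarrow> nat \<Rightarrow> nat \<Rightarrow> (nat \<Rightarrow> nat \<Rightarrow> complex mat) \<Rightarrow> bool" where
  "instrument din dout nI nK K \<longleftrightarrow>
     (\<forall>i<nI. \<forall>k<nK. K i k \<in> carrier_mat dout din) \<and>
     msum din din (\<lambda>(i,k). mat_adjoint (K i k) * K i k) ({..<nI} \<times> {..<nK}) = 1\<^sub>m din"

definition kraus_apply :: "nat \<Rightarrow> (nat \<Rightarrow> nat \<Rightarrow> complex mat) \<Rightarrow> nat \<Rightarrow> nat \<Rightarrow> complex mat \<Rightarrow> complex mat" where
  "kraus_apply dout K nK i \<rho> = msum dout dout (\<lambda>k. K i k * \<rho> * mat_adjoint (K i k)) {..<nK}"

definition kraus_adj :: "nat \<Rightarrow> (nat \<Rightarrow> nat \<Rightarrow> complex mat) \<Rightarrow> nat \<Rightarrow> nat \<Rightarrow> complex mat \<Rightarrow> complex mat" where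
  "kraus_adj din K nK i A = msum din din (\<lambda>k. mat_adjoint (K i k) * A * K i k) {..<nK}"

text \<open>M on C^dQ with M x a = M(a|x); N on C^dQ' with N y b = N(b|y).
  Shared randomness r < nR with law mu; instrument K r from Q' to Q;
  p i y r x = p(x|i,y,r); q a x i y r b = q(b|a,x,i,y,r).\<close>
definition pmd_succeq ::
  "nat \<Rightarrow> ('x::finite \<Rightarrow> 'a::finite \<Rightarrow> complex mat) \<Rightarrow>
   nat \<Rightarrow> ('y::finite \<Rightarrow> 'b::finite \<Rightarrow> complex mat) \<Rightarrow> bool" where
  "pmd_succeq dQ M dQ' N \<longleftrightarrow>
   (\<exists>nR (\<mu>::nat \<Rightarrow> real) nI nK (K::nat \<Rightarrow> nat \<Rightarrow> nat \<Rightarrow> complex mat)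
      (p::nat \<Rightarrow> 'y \<Rightarrow> nat \<Rightarrow> 'x \<Rightarrow> real) (q::'a \<Rightarrow> 'x \<Rightarrow> nat \<Rightarrow> 'y \<Rightarrow> nat \<Rightarrow> 'b \<Rightarrow> real).
      distr \<mu> {..<nR} \<and>
      (\<forall>r<nR. instrument dQ' dQ nI nK (K r)) \<and>
      (\<forall>i<nI. \<forall>y. \<forall>r<nR. distr (p i y r) UNIV) \<and>
      (\<forall>a x. \<forall>i<nI. \<forall>y. \<forall>r<nR. distr (q a x i y r) UNIV) \<and>
      (\<forall>b y. N y b = msum dQ' dQ'
          (\<lambda>(r,i,x,a). complex_of_real (\<mu> r * p i y r x * q a x i y r b) \<cdot>\<^sub>m
                         kraus_adj dQ' (K r) nK i (M x a))
          ({..<nR} \<times> {..<nI} \<times> UNIV \<times> UNIV)))"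

text \<open>Operational one-way LOCC conversion of M (Alice: quantum input C^dQ; Bob: program x,
  outcome a) into a device with Alice's quantum input C^dQ', Bob's input y and output b.
  With shared randomness r < nR (law mu):
  pre-processing: Alice applies an instrument A r (outcomes i < nI, Kraus ops k < nK) from
    C^dQ' to C^dQ (x) C^dK, where C^dK is her quantum side memory, and sends i to Bob;
    Bob, knowing i, y, r, samples the program x together with a classical side memory
    m < nm with probability p i y r (m,x);
  the system C^dQ is fed into Alice's side of M, Bob obtains a;
  post-processing: Alice measures her memory with a POVM F r i (outcomes j < nJ) and sends j
    to Bob; Bob outputs b with probability q a x m j i y r b.\<close>
definition oneway_LOCC_convertible ::
  "nat \<Rightarrow> ('x::finite \<Rightarrow> 'a::finite \<Rightarrow> complex mat) \<Rightarrow>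
   nat \<Rightarrow> ('y::finite \<Rightarrow> 'b::finite \<Rightarrow> complex mat) \<Rightarrow> bool" where
  "oneway_LOCC_convertible dQ M dQ' N \<longleftrightarrow>
   (\<exists>nR (\<mu>::nat \<Rightarrow> real) nI nK dK (A::nat \<Rightarrow> nat \<Rightarrow> nat \<Rightarrow> complex mat)
      nm (p::nat \<Rightarrow> 'y \<Rightarrow> nat \<Rightarrow> nat \<times> 'x \<Rightarrow> real)
      nJ (F::nat \<Rightarrow> nat \<Rightarrow> nat \<Rightarrow> complex mat)
      (q::'a \<Rightarrow> 'x \<Rightarrow> nat \<Rightarrow> nat \<Rightarrow> nat \<Rightarrow> 'y \<Rightarrow> nat \<Rightarrow> 'b \<Rightarrow> real).
      distr \<mu> {..<nR} \<and>
      (\<forall>r<nR. instrument dQ' (dQ * dK) nI nK (A r)) \<and>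
      (\<forall>i<nI. \<forall>y. \<forall>r<nR. distr (p i y r) ({..<nm} \<times> UNIV)) \<and>
      (\<forall>r<nR. \<forall>i<nI. povm dK (F r i) {..<nJ}) \<and>
      (\<forall>a x. \<forall>m<nm. \<forall>j<nJ. \<forall>i<nI. \<forall>y. \<forall>r<nR. distr (q a x m j i y r) UNIV) \<and>
      (\<forall>\<rho>. density dQ' \<rho> \<longrightarrow> (\<forall>y b.
         mtr (N y b * \<rho>) =
         (\<Sum>(r,i,(m,x),a,j) \<in> {..<nR} \<times> {..<nI} \<times> ({..<nm} \<times> UNIV) \<times> UNIV \<times> {..<nJ}.
            complex_of_real (\<mu> r * p i y r (m,x) * q a x m j i y r b) *
            mtr (kron (M x a) (F r i j) * kraus_apply (dQ * dK) (A r) nK i \<rho>)))))"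

end

theory Submission
  imports Defs
begin

text \<open>
  A witness of \<open>pmd_succeq\<close> already is a one-way LOCC protocol in which Alice keeps no quantum
  memory: she applies the instrument and sends its outcome \<open>i\<close>, and Bob samples the program and
  post-processes the outcome. Trace duality between a CP map and its adjoint turns the Heisenberg-picture
  identity for \<open>N\<close> into the required statistics.

  Conversely, Alice's final measurement of her memory can be moved into her instrument. Writing every
  POVM element of that measurement as \<open>F = \<Sum>\<^sub>l |w\<^sub>l\<rangle>\<langle>w\<^sub>l|\<close> (a Cholesky-type decomposition of a positive
  semidefinite matrix), the operators \<open>(1 \<otimes> \<langle>w\<^sub>l|) A\<^sub>k\<close> are the Kraus operators of an instrument with
  outcomes \<open>(i, j)\<close> whose adjoint sends \<open>M\<close> to \<open>\<Sum>\<^sub>k A\<^sub>k\<^sup>\<dagger> (M \<otimes> F) A\<^sub>k\<close>. Bob's classical memory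
  \<open>m\<close> is removed by sampling the program from the marginal of \<open>(m, x)\<close> and mixing his post-processings
  with the posterior of \<open>m\<close>. Two operators with equal traces against all density matrices coincide,
  which turns the equality of statistics into the operator identity defining \<open>pmd_succeq\<close>.
\<close>

section \<open>Sums, traces, adjoints and Kronecker products of matrices\<close>

lemma msum_carrier [simp]: "msum d1 d2 f S \<in> carrier_mat d1 d2"
  by (simp add: msum_def)

lemma dim_msum [simp]: "dim_row (msum d1 d2 f S) = d1" "dim_col (msum d1 d2 f S) = d2"
  by (simp_all add: msum_def)

lemma index_msum [simp]:
  "i < d1 \<Longrightarrow> j < d2 \<Longrightarrow> msum d1 d2 f S $$ (i, j) = (\<Sum>s\<in>S. f s $$ (i, j))"
  by (simp add: msum_def)

lemma msum_cong: "(\<And>s. s \<in> S \<Longrightarrow> f s = g s) \<Longrightarrow> msum d1 d2 f S = msum d1 d2 g S"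
  unfolding msum_def by (intro eq_matI) (auto intro!: sum.cong)

lemma sum_lessThan_mult_nat:
  "(\<Sum>x<n * k. g x) = (\<Sum>i<n. \<Sum>j<k. g (i * k + j :: nat))"
proof -
  have "sum g {i * k..<i * k + k} = (\<Sum>j<k. g (i * k + j))" for i
    using sum.shift_bounds_nat_ivl[of g 0 "i * k" k] by (simp add: atLeast0LessThan add.commute)
  then show ?thesis by (simp flip: sum.nat_group)
qed

lemma msum_lessThan_mult_nat:
  fixes n k :: nat
  shows "msum d1 d2 f {..<n * k} = msum d1 d2 (\<lambda>i. msum d1 d2 (\<lambda>j. f (i * k + j)) {..<k}) {..<n}"
proof (rule eq_matI)
  fix u v assume "u < dim_row (msum d1 d2 (\<lambda>i. msum d1 d2 (\<lambda>j. f (i * k + j)) {..<k}) {..<n})"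
    "v < dim_col (msum d1 d2 (\<lambda>i. msum d1 d2 (\<lambda>j. f (i * k + j)) {..<k}) {..<n})"
  then show "msum d1 d2 f {..<n * k} $$ (u, v)
      = msum d1 d2 (\<lambda>i. msum d1 d2 (\<lambda>j. f (i * k + j)) {..<k}) {..<n} $$ (u, v)"
    using sum_lessThan_mult_nat[of "\<lambda>s. f s $$ (u, v)" n k] by simp
qed simp_all

lemma msum_Times:
  "msum d1 d2 (\<lambda>(a, b). f a b) (A \<times> B) = msum d1 d2 (\<lambda>a. msum d1 d2 (f a) B) A"
  by (intro eq_matI) (simp_all add: sum.cartesian_product split_def)

lemma msum_swap:
  "msum d1 d2 (\<lambda>a. msum d1 d2 (f a) B) A = msum d1 d2 (\<lambda>b. msum d1 d2 (\<lambda>a. f a b) A) B"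
  by (intro eq_matI) (simp_all add: sum.swap[of _ A])

lemma dim_mat_adjoint [simp]:
  "dim_row (mat_adjoint A) = dim_col A" "dim_col (mat_adjoint A) = dim_row A"
  by (simp_all add: mat_adjoint_def)

lemma mat_adjoint_carrier: "A \<in> carrier_mat n m \<Longrightarrow> mat_adjoint A \<in> carrier_mat m n"
  unfolding carrier_mat_def by simp

lemma index_mat_adjoint [simp]:
  "i < dim_col A \<Longrightarrow> j < dim_row A \<Longrightarrow> mat_adjoint A $$ (i, j) = cnj (A $$ (j, i))"
  by (simp add: mat_adjoint_def mat_of_rows_def)

lemma adjoint_sandwich_carrier:
  "K \<in> carrier_mat m n \<Longrightarrow> A \<in> carrier_mat m m \<Longrightarrow> mat_adjoint K * A * K \<in> carrier_mat n n"
  by (metis mult_carrier_mat mat_adjoint_carrier)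

lemma sandwich_adjoint_carrier:
  "K \<in> carrier_mat m n \<Longrightarrow> A \<in> carrier_mat n n \<Longrightarrow> K * A * mat_adjoint K \<in> carrier_mat m m"
  by (metis mult_carrier_mat mat_adjoint_carrier)

lemma index_mult_mat_sum:
  "i < dim_row A \<Longrightarrow> j < dim_col B \<Longrightarrow> dim_col A = dim_row B \<Longrightarrow>
   (A * B) $$ (i, j) = (\<Sum>k<dim_col A. A $$ (i, k) * B $$ (k, j))"
  by (simp add: scalar_prod_def atLeast0LessThan)

declare index_mult_mat(1) [simp del]

lemma mat_adjoint_mult:
  fixes A B :: "complex mat"
  assumes "A \<in> carrier_mat n m" "B \<in> carrier_mat m k"
  shows "mat_adjoint (A * B) = mat_adjoint B * mat_adjoint A"
  using assms by (intro eq_matI) (auto simp: index_mult_mat_sum mult.commute)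

lemma index_sandwich:
  assumes "P \<in> carrier_mat m n" "X \<in> carrier_mat n n" "Q \<in> carrier_mat n m" "i < m" "j < m"
  shows "(P * X * Q) $$ (i, j) = (\<Sum>a<n. \<Sum>b<n. P $$ (i, a) * X $$ (a, b) * Q $$ (b, j))"
  using assms by (simp add: index_mult_mat_sum sum_distrib_left mult.assoc)

lemma msum_sandwich:
  assumes P: "P \<in> carrier_mat m n" and Q: "Q \<in> carrier_mat n m"
    and X: "\<And>s. s \<in> S \<Longrightarrow> X s \<in> carrier_mat n n"
  shows "msum m m (\<lambda>s. P * X s * Q) S = P * msum n n X S * Q"
proof (rule eq_matI)
  fix i j assume "i < dim_row (P * msum n n X S * Q)" "j < dim_col (P * msum n n X S * Q)"
  then have ij: "i < m" "j < m" using P Q by auto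
  have "msum m m (\<lambda>s. P * X s * Q) S $$ (i, j)
      = (\<Sum>s\<in>S. \<Sum>a<n. \<Sum>b<n. P $$ (i, a) * X s $$ (a, b) * Q $$ (b, j))"
    using ij P Q X by (auto intro!: sum.cong simp: index_sandwich)
  also have "\<dots> = (\<Sum>a<n. \<Sum>b<n. \<Sum>s\<in>S. P $$ (i, a) * X s $$ (a, b) * Q $$ (b, j))"
    by (simp add: sum.swap[of _ S])
  also have "\<dots> = (P * msum n n X S * Q) $$ (i, j)"
    using ij P Q by (simp add: index_sandwich sum_distrib_left sum_distrib_right)
  finally show "msum m m (\<lambda>s. P * X s * Q) S $$ (i, j) = (P * msum n n X S * Q) $$ (i, j)" .
qed (use P Q in auto)

lemma mtr_mult:
  "A \<in> carrier_mat n m \<Longrightarrow> B \<in> carrier_mat m n \<Longrightarrow>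
   mtr (A * B) = (\<Sum>u<n. \<Sum>v<m. A $$ (u, v) * B $$ (v, u))"
  by (simp add: mtr_def index_mult_mat_sum)

lemma mtr_mult_commute:
  "A \<in> carrier_mat n m \<Longrightarrow> B \<in> carrier_mat m n \<Longrightarrow> mtr (A * B) = mtr (B * A)"
  by (simp add: mtr_mult[of A n m] mtr_mult[of B m n] sum.swap[of _ "{..<n}"] mult.commute)

lemma mtr_smult_mult:
  "A \<in> carrier_mat n m \<Longrightarrow> B \<in> carrier_mat m n \<Longrightarrow> mtr ((c \<cdot>\<^sub>m A) * B) = c * mtr (A * B)"
  by (simp add: mtr_mult[of _ n m] sum_distrib_left mult.assoc)

lemma mtr_msum_mult:
  assumes "B \<in> carrier_mat d d" "\<And>s. s \<in> S \<Longrightarrow> f s \<in> carrier_mat d d"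
  shows "mtr (msum d d f S * B) = (\<Sum>s\<in>S. mtr (f s * B))"
proof -
  have "mtr (msum d d f S * B) = (\<Sum>u<d. \<Sum>v<d. \<Sum>s\<in>S. f s $$ (u, v) * B $$ (v, u))"
    using assms by (simp add: mtr_mult[of _ d d] sum_distrib_right)
  also have "\<dots> = (\<Sum>s\<in>S. \<Sum>u<d. \<Sum>v<d. f s $$ (u, v) * B $$ (v, u))"
    by (simp add: sum.swap[of _ S])
  also have "\<dots> = (\<Sum>s\<in>S. mtr (f s * B))"
    using assms by (simp add: mtr_mult[of _ d d])
  finally show ?thesis .
qed

lemma mtr_mult_msum:
  assumes "A \<in> carrier_mat d d" "\<And>s. s \<in> S \<Longrightarrow> f s \<in> carrier_mat d d"
  shows "mtr (A * msum d d f S) = (\<Sum>s\<in>S. mtr (A * f s))"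
proof -
  have "mtr (A * msum d d f S) = mtr (msum d d f S * A)"
    using assms(1) by (simp add: mtr_mult_commute[of A d d])
  also have "\<dots> = (\<Sum>s\<in>S. mtr (f s * A))"
    using assms by (rule mtr_msum_mult)
  also have "\<dots> = (\<Sum>s\<in>S. mtr (A * f s))"
    using assms by (intro sum.cong refl mtr_mult_commute) auto
  finally show ?thesis .
qed

lemma mtr_adjoint_sandwich:
  fixes P :: "complex mat"
  assumes P: "P \<in> carrier_mat m n" and X: "X \<in> carrier_mat m m" and B: "B \<in> carrier_mat n n"
  shows "mtr (mat_adjoint P * X * P * B) = mtr (X * (P * B * mat_adjoint P))"
proof -
  have Ph: "mat_adjoint P \<in> carrier_mat n m" using P by (rule mat_adjoint_carrier)
  have PhX: "mat_adjoint P * X \<in> carrier_mat n m" and PB: "P * B \<in> carrier_mat m n"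
    using Ph P X B by simp_all
  have XPB: "X * (P * B) \<in> carrier_mat m n" using X PB by simp
  have "mtr (mat_adjoint P * X * P * B) = mtr (mat_adjoint P * (X * (P * B)))"
    using assoc_mult_mat[OF PhX P B] assoc_mult_mat[OF Ph X PB] by (simp only:)
  also have "\<dots> = mtr ((X * (P * B)) * mat_adjoint P)"
    by (rule mtr_mult_commute[OF Ph XPB])
  also have "(X * (P * B)) * mat_adjoint P = X * (P * B * mat_adjoint P)"
    by (rule assoc_mult_mat[OF X PB Ph])
  finally show ?thesis .
qed

lemma mat_adjoint_mult_sandwich:
  fixes P A :: "complex mat"
  assumes P: "P \<in> carrier_mat m n" and A: "A \<in> carrier_mat n k" and M: "M \<in> carrier_mat m m"
  shows "mat_adjoint (P * A) * M * (P * A) = mat_adjoint A * (mat_adjoint P * M * P) * A"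
proof -
  have Ph: "mat_adjoint P \<in> carrier_mat n m" and Ah: "mat_adjoint A \<in> carrier_mat k n"
    using P A by (simp_all add: mat_adjoint_carrier)
  have PhM: "mat_adjoint P * M \<in> carrier_mat n m" and AhPhM: "mat_adjoint A * (mat_adjoint P * M) \<in> carrier_mat k m"
    using Ph Ah M by simp_all
  have "mat_adjoint (P * A) * M * (P * A) = mat_adjoint A * mat_adjoint P * M * (P * A)"
    by (simp only: mat_adjoint_mult[OF P A])
  also have "\<dots> = mat_adjoint A * (mat_adjoint P * M) * P * A"
    by (simp only: assoc_mult_mat[OF Ah Ph M] assoc_mult_mat[OF AhPhM P A])
  also have "\<dots> = mat_adjoint A * (mat_adjoint P * M * P) * A"
    by (simp only: assoc_mult_mat[OF Ah PhM P])
  finally show ?thesis .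
qed

lemma dim_kron [simp]:
  "dim_row (kron A B) = dim_row A * dim_row B" "dim_col (kron A B) = dim_col A * dim_col B"
  by (simp_all add: kron_def)

lemma index_kron:
  "u < dim_row A * dim_row B \<Longrightarrow> v < dim_col A * dim_col B \<Longrightarrow>
   kron A B $$ (u, v) = A $$ (u div dim_row B, v div dim_col B) * B $$ (u mod dim_row B, v mod dim_col B)"
  by (simp add: kron_def)

lemma kron_carrier [simp]:
  "A \<in> carrier_mat n m \<Longrightarrow> B \<in> carrier_mat p q \<Longrightarrow> kron A B \<in> carrier_mat (n * p) (m * q)"
  unfolding carrier_mat_def by simp

lemma kron_one_1 [simp]: "kron A (1\<^sub>m 1) = A"
  by (intro eq_matI) (simp_all add: index_kron)

lemma kron_one_one: "kron (1\<^sub>m n) (1\<^sub>m d) = 1\<^sub>m (n * d)"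
proof (rule eq_matI)
  fix u v assume "u < dim_row (1\<^sub>m (n * d))" "v < dim_col (1\<^sub>m (n * d))"
  then have uv: "u < n * d" "v < n * d" by simp_all
  then have "d > 0" by (cases d) simp_all
  moreover have "u div d = v div d \<and> u mod d = v mod d \<longleftrightarrow> u = v"
    by (metis div_mult_mod_eq)
  ultimately show "kron (1\<^sub>m n) (1\<^sub>m d) $$ (u, v) = 1\<^sub>m (n * d) $$ (u, v)"
    using uv by (auto simp: index_kron less_mult_imp_div_less)
qed simp_all

lemma kron_msum_right:
  assumes f: "\<And>s. s \<in> S \<Longrightarrow> f s \<in> carrier_mat d d"
  shows "kron A (msum d d f S) = msum (dim_row A * d) (dim_col A * d) (\<lambda>s. kron A (f s)) S"
proof (rule eq_matI)
  fix u v assume "u < dim_row (msum (dim_row A * d) (dim_col A * d) (\<lambda>s. kron A (f s)) S)"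
    "v < dim_col (msum (dim_row A * d) (dim_col A * d) (\<lambda>s. kron A (f s)) S)"
  then have uv: "u < dim_row A * d" "v < dim_col A * d" by simp_all
  then have "u mod d < d" "v mod d < d" by (cases d; simp)+
  then have "kron A (msum d d f S) $$ (u, v) = (\<Sum>s\<in>S. A $$ (u div d, v div d) * f s $$ (u mod d, v mod d))"
    using uv by (simp add: index_kron sum_distrib_left)
  also have "\<dots> = msum (dim_row A * d) (dim_col A * d) (\<lambda>s. kron A (f s)) S $$ (u, v)"
    using uv f[THEN carrier_matD(1)] f[THEN carrier_matD(2)] by (auto simp: index_kron intro!: sum.cong)
  finally show "kron A (msum d d f S) $$ (u, v) = msum (dim_row A * d) (dim_col A * d) (\<lambda>s. kron A (f s)) S $$ (u, v)" .
qed simp_all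

section \<open>Quadratic forms and positive semidefinite matrices\<close>

definition qform :: "nat \<Rightarrow> complex mat \<Rightarrow> (nat \<Rightarrow> complex) \<Rightarrow> complex" where
  "qform d A f = (\<Sum>s<d. \<Sum>t<d. cnj (f s) * A $$ (s, t) * f t)"

definition outer :: "nat \<Rightarrow> (nat \<Rightarrow> complex) \<Rightarrow> complex mat" where
  "outer d w = mat d d (\<lambda>(s, t). w s * cnj (w t))"

lemma outer_carrier [simp]: "outer d w \<in> carrier_mat d d"
  by (simp add: outer_def)

lemma dim_outer [simp]: "dim_row (outer d w) = d" "dim_col (outer d w) = d"
  by (simp_all add: outer_def)

lemma index_outer [simp]: "s < d \<Longrightarrow> t < d \<Longrightarrow> outer d w $$ (s, t) = w s * cnj (w t)"
  by (simp add: outer_def)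

lemma cscalar_prod_mult_mat_vec_eq_qform:
  "A \<in> carrier_mat d d \<Longrightarrow> v \<in> carrier_vec d \<Longrightarrow> (A *\<^sub>v v) \<bullet>c v = qform d A (\<lambda>i. v $ i)"
  by (simp add: qform_def scalar_prod_def mult_mat_vec_def sum_distrib_left atLeast0LessThan
      mult.commute mult.left_commute)

lemma psd_iff_qform:
  "psd d A \<longleftrightarrow> A \<in> carrier_mat d d \<and> (\<forall>f. Im (qform d A f) = 0 \<and> Re (qform d A f) \<ge> 0)"
proof -
  have "qform d A f = qform d A (\<lambda>i. vec d f $ i)" for f
    unfolding qform_def by (intro sum.cong refl) simp
  then show ?thesis
    unfolding psd_def by (metis carrier_vec_dim_vec cscalar_prod_mult_mat_vec_eq_qform vec_carrier)
qed

lemma qform_supported: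
  assumes T: "T \<subseteq> {..<d}" and f: "\<And>i. i < d \<Longrightarrow> i \<notin> T \<Longrightarrow> f i = 0"
  shows "qform d A f = (\<Sum>s\<in>T. \<Sum>t\<in>T. cnj (f s) * A $$ (s, t) * f t)"
proof -
  have "finite T" using T finite_subset by blast
  then have "qform d A f = (\<Sum>s\<in>T. \<Sum>t<d. cnj (f s) * A $$ (s, t) * f t)"
    unfolding qform_def using T f by (intro sum.mono_neutral_right) auto
  also have "\<dots> = (\<Sum>s\<in>T. \<Sum>t\<in>T. cnj (f s) * A $$ (s, t) * f t)"
    using \<open>finite T\<close> T f by (intro sum.cong refl sum.mono_neutral_right) auto
  finally show ?thesis .
qed

lemma qform_one_point:
  "s < d \<Longrightarrow> qform d A (\<lambda>i. if i = s then 1 else 0) = A $$ (s, s)"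
  by (subst qform_supported[of "{s}"]) auto

lemma qform_two_point:
  assumes "s < d" "t < d" "s \<noteq> t"
  shows "qform d A (\<lambda>i. if i = s then 1 else if i = t then c else 0)
    = A $$ (s, s) + A $$ (s, t) * c + cnj c * A $$ (t, s) + cnj c * A $$ (t, t) * c"
  using assms by (subst qform_supported[of "{s, t}"]) auto

lemma qform_minus:
  "A \<in> carrier_mat d d \<Longrightarrow> B \<in> carrier_mat d d \<Longrightarrow> qform d (A - B) f = qform d A f - qform d B f"
  by (simp add: qform_def algebra_simps sum_subtractf)

lemma qform_outer:
  "qform d (outer d w) f = cnj (\<Sum>t<d. cnj (w t) * f t) * (\<Sum>t<d. cnj (w t) * f t)"
  unfolding qform_def by (simp add: sum_distrib_left sum_distrib_right mult.commute mult.left_commute)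

lemma cnj_mult_self: "cnj z * z = of_real ((cmod z)\<^sup>2)"
  by (metis complex_norm_square mult.commute)

lemma psd_outer: "psd d (outer d w)"
proof -
  have "Im (cnj y * y) = 0 \<and> Re (cnj y * y) \<ge> 0" for y
    unfolding cnj_mult_self by simp
  then show ?thesis unfolding psd_iff_qform qform_outer using outer_carrier by blast
qed

lemma qform_mat_adjoint:
  assumes "A \<in> carrier_mat d d"
  shows "qform d (mat_adjoint A) f = cnj (qform d A f)"
proof -
  have "qform d (mat_adjoint A) f = (\<Sum>s<d. \<Sum>t<d. cnj (f s) * cnj (A $$ (t, s)) * f t)"
    using assms by (simp add: qform_def)
  also have "\<dots> = (\<Sum>t<d. \<Sum>s<d. cnj (f s) * cnj (A $$ (t, s)) * f t)"
    by (rule sum.swap)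
  also have "\<dots> = cnj (qform d A f)"
    by (simp add: qform_def mult_ac)
  finally show ?thesis .
qed

lemma eq_mat_of_qform_eq:
  assumes A: "A \<in> carrier_mat d d" and B: "B \<in> carrier_mat d d"
    and eq: "\<And>f. qform d A f = qform d B f"
  shows "A = B"
proof -
  define D where "D = A - B"
  have D0: "qform d D f = 0" for f
    using A B eq by (simp add: D_def qform_minus)
  have diag: "D $$ (s, s) = 0" if "s < d" for s
    using D0 qform_one_point[OF that] by metis
  have off: "D $$ (s, t) = 0" if st: "s < d" "t < d" "s \<noteq> t" for s t
  proof -
    have cross: "D $$ (s, t) * c + cnj c * D $$ (t, s) = 0" for c
      using D0[of "\<lambda>i. if i = s then 1 else if i = t then c else 0"] diag st
      by (simp add: qform_two_point)
    have "\<i> * (D $$ (s, t) - D $$ (t, s)) = 0"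
      using cross[of \<i>] by (simp add: algebra_simps)
    then have "D $$ (s, t) = D $$ (t, s)" by simp
    then show ?thesis using cross[of 1] by simp
  qed
  show ?thesis
  proof (rule eq_matI)
    fix s t assume st: "s < dim_row B" "t < dim_col B"
    then have "D $$ (s, t) = 0" using B diag off by (cases "s = t") auto
    then show "A $$ (s, t) = B $$ (s, t)" using A B st by (simp add: D_def)
  qed (use A B in auto)
qed

lemma psd_hermitian: assumes "psd d A" shows "mat_adjoint A = A"
proof (rule eq_mat_of_qform_eq)
  show A: "A \<in> carrier_mat d d" using assms by (simp add: psd_def)
  then show "mat_adjoint A \<in> carrier_mat d d" by (rule mat_adjoint_carrier)
  fix f show "qform d (mat_adjoint A) f = qform d A f"
    using assms A by (simp add: qform_mat_adjoint psd_iff_qform complex_eq_iff)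
qed

lemma psd_index_hermitian:
  "psd d A \<Longrightarrow> s < d \<Longrightarrow> t < d \<Longrightarrow> A $$ (t, s) = cnj (A $$ (s, t))"
  by (metis complex_cnj_cnj psd_hermitian index_mat_adjoint psd_def carrier_matD)

lemma psd_index_diag: "psd d A \<Longrightarrow> s < d \<Longrightarrow> Im (A $$ (s, s)) = 0 \<and> Re (A $$ (s, s)) \<ge> 0"
  by (metis psd_iff_qform qform_one_point)

lemma qform_add_point:
  fixes f :: "nat \<Rightarrow> complex"
  assumes G: "G \<in> carrier_mat d d" "mat_adjoint G = G" and k: "k < d"
  defines "z \<equiv> \<Sum>t<d. G $$ (k, t) * f t"
  shows "qform d G (\<lambda>i. f i + (if i = k then c else 0))
    = qform d G f + c * cnj z + cnj c * z + cnj c * G $$ (k, k) * c"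
proof -
  define g where "g i = (if i = k then c else 0)" for i
  have herm: "G $$ (s, k) = cnj (G $$ (k, s))" if "s < d" for s
    using G k that by (metis index_mat_adjoint carrier_matD)
  have "qform d G (\<lambda>i. f i + g i) = qform d G f
      + (\<Sum>s<d. \<Sum>t<d. cnj (f s) * G $$ (s, t) * g t) + (\<Sum>s<d. \<Sum>t<d. cnj (g s) * G $$ (s, t) * f t)
      + qform d G g"
    by (simp add: qform_def algebra_simps sum.distrib)
  also have "(\<Sum>s<d. \<Sum>t<d. cnj (f s) * G $$ (s, t) * g t) = c * cnj z"
    using k herm by (simp add: g_def z_def if_distrib sum_distrib_left mult.commute mult.left_commute cong: if_cong)
  also have "(\<Sum>s<d. \<Sum>t<d. cnj (g s) * G $$ (s, t) * f t) = (\<Sum>s<d. cnj (g s) * (\<Sum>t<d. G $$ (s, t) * f t))"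
    by (simp add: sum_distrib_left mult.assoc)
  also have "\<dots> = cnj c * z"
    using k by (simp add: g_def z_def if_distrib if_distribR cong: if_cong)
  also have "qform d G g = cnj c * G $$ (k, k) * c"
    using k by (subst qform_supported[of "{k}"]) (auto simp: g_def)
  finally show ?thesis by (simp add: g_def)
qed

lemma psd_minus_outer_pivot:
  assumes G: "psd d G" and k: "k < d" and pos: "Re (G $$ (k, k)) > 0"
  defines "w \<equiv> \<lambda>i. G $$ (i, k) / sqrt (Re (G $$ (k, k)))"
  shows "psd d (G - outer d w)"
    and "\<And>s t. s < d \<Longrightarrow> t < d \<Longrightarrow>
      (G - outer d w) $$ (s, t) = G $$ (s, t) - G $$ (s, k) * G $$ (k, t) / G $$ (k, k)"
proof -
  define a where "a = Re (G $$ (k, k))"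
  have Gc: "G \<in> carrier_mat d d" and herm: "mat_adjoint G = G"
    using G psd_hermitian by (auto simp: psd_def)
  have Gkk: "G $$ (k, k) = of_real a"
    using psd_index_diag[OF G k] by (simp add: a_def complex_eq_iff)
  have sq: "of_real (sqrt a) * of_real (sqrt a) = (of_real a :: complex)"
    using pos by (simp add: a_def flip: of_real_mult)
  have w: "w i = G $$ (i, k) / of_real (sqrt a)" for i
    by (simp add: w_def a_def)
  have cnj_w: "cnj (w t) = G $$ (k, t) / of_real (sqrt a)" if "t < d" for t
    using psd_index_hermitian[OF G k that] by (simp add: w)
  show "(G - outer d w) $$ (s, t) = G $$ (s, t) - G $$ (s, k) * G $$ (k, t) / G $$ (k, k)"
    if "s < d" "t < d" for s t
    using that Gc psd_index_hermitian[OF G k that(2)] by (simp add: w Gkk flip: sq)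
  show "psd d (G - outer d w)"
    unfolding psd_iff_qform
  proof (intro conjI allI)
    show "G - outer d w \<in> carrier_mat d d" by (intro minus_carrier_mat) simp
    fix f
    define z where "z = (\<Sum>t<d. G $$ (k, t) * f t)"
    define c where "c = - z / of_real a"
    have "(\<Sum>t<d. cnj (w t) * f t) = z / of_real (sqrt a)"
      by (simp add: z_def cnj_w sum_divide_distrib)
    then have "qform d (G - outer d w) f = qform d G f - cnj z * z / of_real a"
      using Gc by (simp add: qform_minus qform_outer flip: sq)
    also have "cnj z * z / of_real a = - (c * cnj z + cnj c * z + cnj c * of_real a * c)"
      using pos by (simp add: c_def a_def field_simps)
    (* positivity is inherited from the form of G at f shifted along the k-th unit vector *)
    also have "qform d G f - - (c * cnj z + cnj c * z + cnj c * of_real a * c)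
        = qform d G (\<lambda>i. f i + (if i = k then c else 0))"
      using qform_add_point[OF Gc herm k, of f c] by (simp add: z_def Gkk)
    finally show "Im (qform d (G - outer d w) f) = 0" "Re (qform d (G - outer d w) f) \<ge> 0"
      using G by (simp_all add: psd_iff_qform)
  qed
qed

lemma psd_row_zero:
  assumes G: "psd d G" and k: "k < d" "t < d" and zero: "G $$ (k, k) = 0"
  shows "G $$ (k, t) = 0"
proof (rule ccontr)
  define g where "g = G $$ (k, t)"
  assume "G $$ (k, t) \<noteq> 0"
  then have n: "(cmod g)\<^sup>2 > 0" and "k \<noteq> t" using zero by (auto simp: g_def)
  define \<tau> where "\<tau> = (Re (G $$ (t, t)) + 1) / (2 * (cmod g)\<^sup>2)"
  define v where "v = (\<lambda>i. if i = t then 1 else if i = k then - of_real \<tau> * g else 0)"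
  have "qform d G v = G $$ (t, t) - of_real (2 * \<tau> * (cmod g)\<^sup>2)"
    using qform_two_point[OF k(2,1)] \<open>k \<noteq> t\<close> zero psd_index_hermitian[OF G k]
    by (simp add: v_def g_def algebra_simps complex_norm_square[unfolded of_real_power])
  also have "2 * \<tau> * (cmod g)\<^sup>2 = Re (G $$ (t, t)) + 1"
    using n by (simp add: \<tau>_def)
  finally have "Re (qform d G v) = -1"
    by simp
  moreover have "Re (qform d G v) \<ge> 0"
    using G unfolding psd_iff_qform by blast
  ultimately show False by simp
qed

lemma pivot_entry_zero:
  fixes G :: "complex mat"
  assumes k: "k < d" and Gkk: "G $$ (k, k) \<noteq> 0"
    and zero: "\<forall>s<d. \<forall>t<d. s < k \<or> t < k \<longrightarrow> G $$ (s, t) = 0"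
    and st: "s < d" "t < d" "s < Suc k \<or> t < Suc k"
  shows "G $$ (s, t) - G $$ (s, k) * G $$ (k, t) / G $$ (k, k) = 0"
proof -
  consider "s < k" | "t < k" | "s = k" | "t = k" using st(3) by linarith
  then show ?thesis
  proof cases
    case 1
    then have "G $$ (s, t) = 0" "G $$ (s, k) = 0" using zero st k by blast+
    then show ?thesis by simp
  next
    case 2
    then have "G $$ (s, t) = 0" "G $$ (k, t) = 0" using zero st k by blast+
    then show ?thesis by simp
  qed (use Gkk in simp_all)
qed

lemma psd_pivot_step:
  assumes G: "psd d G" and k: "k < d"
    and zero: "\<forall>s<d. \<forall>t<d. s < k \<or> t < k \<longrightarrow> G $$ (s, t) = 0"
  obtains w where "psd d (G - outer d w)"
    and "\<forall>s<d. \<forall>t<d. s < Suc k \<or> t < Suc k \<longrightarrow> (G - outer d w) $$ (s, t) = 0"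
proof (cases "G $$ (k, k) = 0")
  case True
  have G0: "G - outer d (\<lambda>_. 0) = G" using G by (intro eq_matI) (auto simp: psd_def)
  have "G $$ (k, t) = 0" "G $$ (t, k) = 0" if "t < d" for t
    using psd_row_zero[OF G k that True] psd_index_hermitian[OF G k that] by simp_all
  then show thesis
  proof (intro that[of "\<lambda>_. 0"])
    show "psd d (G - outer d (\<lambda>_. 0))" using G G0 by simp
  qed (use G0 zero in \<open>auto simp: less_Suc_eq\<close>)
next
  case False
  then have pos: "Re (G $$ (k, k)) > 0"
    using psd_index_diag[OF G k] by (simp add: complex_eq_iff order_less_le)
  define w where "w = (\<lambda>i. G $$ (i, k) / sqrt (Re (G $$ (k, k))))"
  have entry: "(G - outer d w) $$ (s, t) = G $$ (s, t) - G $$ (s, k) * G $$ (k, t) / G $$ (k, k)"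
    if "s < d" "t < d" for s t
    unfolding w_def by (rule psd_minus_outer_pivot(2)[OF G k pos that])
  show thesis
  proof (rule that[of w])
    show "psd d (G - outer d w)"
      unfolding w_def by (rule psd_minus_outer_pivot(1)[OF G k pos])
    show "\<forall>s<d. \<forall>t<d. s < Suc k \<or> t < Suc k \<longrightarrow> (G - outer d w) $$ (s, t) = 0"
      using entry pivot_entry_zero[OF k False zero] by simp
  qed
qed

lemma msum_atLeastLessThan_Suc:
  assumes "k < n" "f k \<in> carrier_mat d d"
  shows "msum d d f {k..<n} = f k + msum d d f {Suc k..<n}"
  using assms by (intro eq_matI) (auto simp: sum.atLeast_Suc_lessThan)

lemma psd_eq_msum_outer_from:
  assumes "psd d G" "k \<le> d" "\<forall>s<d. \<forall>t<d. s < k \<or> t < k \<longrightarrow> G $$ (s, t) = 0"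
  shows "\<exists>ws. G = msum d d (\<lambda>l. outer d (ws l)) {k..<d}"
  using assms
proof (induction "d - k" arbitrary: k G)
  case 0
  then show ?case by (intro exI eq_matI) (auto simp: psd_def)
next
  case (Suc n)
  then have k: "k < d" by simp
  obtain w where w: "psd d (G - outer d w)"
    "\<forall>s<d. \<forall>t<d. s < Suc k \<or> t < Suc k \<longrightarrow> (G - outer d w) $$ (s, t) = 0"
    using psd_pivot_step[OF Suc.prems(1) k Suc.prems(3)] by blast
  obtain ws where ws: "G - outer d w = msum d d (\<lambda>l. outer d (ws l)) {Suc k..<d}"
    using Suc.hyps(1)[of "Suc k"] Suc.hyps(2) k w by fastforce
  have "msum d d (\<lambda>l. outer d ((ws(k := w)) l)) {Suc k..<d} = G - outer d w"
    unfolding ws by (intro msum_cong) simp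
  then have "msum d d (\<lambda>l. outer d ((ws(k := w)) l)) {k..<d} = outer d w + (G - outer d w)"
    using k by (simp add: msum_atLeastLessThan_Suc)
  also have "\<dots> = G"
    using Suc.prems(1) by (intro eq_matI) (auto simp: psd_def)
  finally show ?case by (intro exI[of _ "ws(k := w)"]) simp
qed

lemma psd_eq_msum_outer: "psd d G \<Longrightarrow> \<exists>ws. G = msum d d (\<lambda>l. outer d (ws l)) {..<d}"
  using psd_eq_msum_outer_from[of d G 0] by (simp add: atLeast0LessThan)

lemma mtr_mult_outer: "A \<in> carrier_mat d d \<Longrightarrow> mtr (A * outer d v) = qform d A v"
  by (simp add: mtr_mult[of _ d d] qform_def mult.commute mult.left_commute)

lemma density_outer: "(\<Sum>u<d. cnj (v u) * v u) = 1 \<Longrightarrow> density d (outer d v)"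
  by (simp add: density_def psd_outer mtr_def mult.commute)

lemma qform_scale: "qform d A (\<lambda>i. c * f i) = cnj c * c * qform d A f"
  by (simp add: qform_def sum_distrib_left mult_ac)

lemma eq_mat_of_mtr_density_eq:
  assumes A: "A \<in> carrier_mat d d" and B: "B \<in> carrier_mat d d"
    and eq: "\<And>\<rho>. density d \<rho> \<Longrightarrow> mtr (A * \<rho>) = mtr (B * \<rho>)"
  shows "A = B"
proof (rule eq_mat_of_qform_eq[OF A B])
  fix f
  define r where "r = (\<Sum>u<d. (cmod (f u))\<^sup>2)"
  have norm: "(\<Sum>u<d. cnj (f u) * f u) = of_real r"
    unfolding r_def of_real_sum by (intro sum.cong refl) (rule cnj_mult_self)
  show "qform d A f = qform d B f"
  proof (cases "r = 0")
    case True
    then have "f u = 0" if "u < d" for u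
      using that by (simp add: r_def sum_nonneg_eq_0_iff)
    then show ?thesis by (simp add: qform_def)
  next
    case False
    define c where "c = (of_real (1 / sqrt r) :: complex)"
    have "r > 0" using False by (simp add: r_def order_less_le sum_nonneg)
    then have cc: "cnj c * c = 1 / of_real r" "cnj c * c \<noteq> 0"
      by (simp_all add: c_def flip: of_real_mult)
    have "(\<Sum>u<d. cnj (c * f u) * (c * f u)) = cnj c * c * (\<Sum>u<d. cnj (f u) * f u)"
      by (simp add: sum_distrib_left mult_ac)
    also have "\<dots> = 1"
      using cc(1) norm \<open>r > 0\<close> by simp
    finally have "(\<Sum>u<d. cnj (c * f u) * (c * f u)) = 1" .
    then have "qform d A (\<lambda>i. c * f i) = qform d B (\<lambda>i. c * f i)"
      using eq[OF density_outer] A B by (simp add: mtr_mult_outer)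
    then show ?thesis using cc by (simp add: qform_scale)
  qed
qed

section \<open>Kraus maps and absorption of a memory measurement\<close>

lemma kraus_adj_carrier [simp]: "kraus_adj din K nK i A \<in> carrier_mat din din"
  by (simp add: kraus_adj_def)

lemma mtr_kraus_adj_mult:
  assumes K: "\<And>k. k < nK \<Longrightarrow> K i k \<in> carrier_mat dout din"
    and A: "A \<in> carrier_mat dout dout" and \<rho>: "\<rho> \<in> carrier_mat din din"
  shows "mtr (kraus_adj din K nK i A * \<rho>) = mtr (A * kraus_apply dout K nK i \<rho>)"
proof -
  have KAK: "mat_adjoint (K i k) * A * K i k \<in> carrier_mat din din" if "k \<in> {..<nK}" for k
    using adjoint_sandwich_carrier[OF K A] that by simp
  have K\<rho>K: "K i k * \<rho> * mat_adjoint (K i k) \<in> carrier_mat dout dout" if "k \<in> {..<nK}" for k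
    using sandwich_adjoint_carrier[OF K \<rho>] that by simp
  have "mtr (kraus_adj din K nK i A * \<rho>) = (\<Sum>k<nK. mtr (mat_adjoint (K i k) * A * K i k * \<rho>))"
    unfolding kraus_adj_def using \<rho> KAK by (rule mtr_msum_mult)
  also have "\<dots> = (\<Sum>k<nK. mtr (A * (K i k * \<rho> * mat_adjoint (K i k))))"
    by (intro sum.cong refl mtr_adjoint_sandwich[OF K A \<rho>]) simp
  also have "\<dots> = mtr (A * kraus_apply dout K nK i \<rho>)"
    unfolding kraus_apply_def using A K\<rho>K by (rule mtr_mult_msum[symmetric])
  finally show ?thesis .
qed

lemma kraus_adj_msum:
  assumes K: "\<And>k. k < nK \<Longrightarrow> K i k \<in> carrier_mat dout din"
    and f: "\<And>s. s \<in> S \<Longrightarrow> f s \<in> carrier_mat dout dout"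
  shows "kraus_adj din K nK i (msum dout dout f S) = msum din din (\<lambda>s. kraus_adj din K nK i (f s)) S"
proof -
  have "kraus_adj din K nK i (msum dout dout f S)
      = msum din din (\<lambda>k. msum din din (\<lambda>s. mat_adjoint (K i k) * f s * K i k) S) {..<nK}"
    unfolding kraus_adj_def
  proof (intro msum_cong)
    fix k assume "k \<in> {..<nK}"
    then have Kk: "K i k \<in> carrier_mat dout din" using K by simp
    show "mat_adjoint (K i k) * msum dout dout f S * K i k
        = msum din din (\<lambda>s. mat_adjoint (K i k) * f s * K i k) S"
      by (rule msum_sandwich[OF mat_adjoint_carrier[OF Kk] Kk f, symmetric])
  qed
  also have "\<dots> = msum din din (\<lambda>s. kraus_adj din K nK i (f s)) S"
    unfolding kraus_adj_def by (rule msum_swap)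
  finally show ?thesis .
qed

definition bra :: "nat \<Rightarrow> (nat \<Rightarrow> complex) \<Rightarrow> complex mat" where
  "bra d w = mat 1 d (\<lambda>(_, a). cnj (w a))"

lemma kron_one_bra_carrier [simp]: "kron (1\<^sub>m n) (bra d w) \<in> carrier_mat n (n * d)"
  unfolding carrier_mat_def by (simp add: bra_def)

lemma sandwich_kron_one_bra:
  assumes M: "M \<in> carrier_mat n n"
  shows "mat_adjoint (kron (1\<^sub>m n) (bra d w)) * M * kron (1\<^sub>m n) (bra d w) = kron M (outer d w)"
proof (rule eq_matI)
  define V where "V = kron (1\<^sub>m n) (bra d w)"
  have V: "V \<in> carrier_mat n (n * d)" and Vh: "mat_adjoint V \<in> carrier_mat (n * d) n"
    by (simp_all add: V_def mat_adjoint_carrier)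
  fix a b assume "a < dim_row (kron M (outer d w))" "b < dim_col (kron M (outer d w))"
  then have ab: "a < n * d" "b < n * d" using M by simp_all
  moreover have "d > 0" using ab by (cases d) simp_all
  ultimately have div: "a div d < n" "b div d < n" and mod: "a mod d < d" "b mod d < d"
    by (simp_all add: less_mult_imp_div_less)
  have V_index: "V $$ (u, c) = (if u = c div d then cnj (w (c mod d)) else 0)" if "u < n" "c < n * d" for u c
    using that \<open>d > 0\<close> by (simp add: V_def index_kron bra_def less_mult_imp_div_less)
  have Vh_index: "mat_adjoint V $$ (c, u) = (if u = c div d then w (c mod d) else 0)" if "u < n" "c < n * d" for u c
    using that V by (simp add: V_index)
  have "(mat_adjoint V * M * V) $$ (a, b) = (\<Sum>u<n. \<Sum>v<n.
      (if u = a div d then w (a mod d) else 0) * M $$ (u, v) * (if v = b div d then cnj (w (b mod d)) else 0))"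
    using ab by (simp add: index_sandwich[OF Vh M V] Vh_index V_index)
  also have "\<dots> = w (a mod d) * M $$ (a div d, b div d) * cnj (w (b mod d))"
  proof -
    have "(if u = a div d then w (a mod d) else 0) * M $$ (u, v) * (if v = b div d then cnj (w (b mod d)) else 0)
        = (if v = b div d then if u = a div d then w (a mod d) * M $$ (u, v) * cnj (w (b mod d)) else 0 else 0)"
      for u v by simp
    then show ?thesis using div by simp
  qed
  also have "\<dots> = kron M (outer d w) $$ (a, b)"
    using ab mod M by (simp add: index_kron)
  finally show "(mat_adjoint (kron (1\<^sub>m n) (bra d w)) * M * kron (1\<^sub>m n) (bra d w)) $$ (a, b)
      = kron M (outer d w) $$ (a, b)" by (simp add: V_def)
qed (use M in \<open>simp_all add: bra_def\<close>)

lemma kraus_adj_absorb_bra: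
  assumes A: "\<And>k. k < nK \<Longrightarrow> A i k \<in> carrier_mat (dQ * dK) dQ'" and M: "M \<in> carrier_mat dQ dQ"
    and B: "\<And>k. B i' k = kron (1\<^sub>m dQ) (bra dK (w (k mod dK))) * A i (k div dK)"
  shows "kraus_adj dQ' B (nK * dK) i' M
    = kraus_adj dQ' A nK i (kron M (msum dK dK (\<lambda>l. outer dK (w l)) {..<dK}))"
proof -
  have "kraus_adj dQ' B (nK * dK) i' M = msum dQ' dQ' (\<lambda>k. msum dQ' dQ'
      (\<lambda>l. mat_adjoint (A i k) * kron M (outer dK (w l)) * A i k) {..<dK}) {..<nK}"
    unfolding kraus_adj_def msum_lessThan_mult_nat
  proof (intro msum_cong)
    fix k l assume "k \<in> {..<nK}" "l \<in> {..<dK}"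
    then have "B i' (k * dK + l) = kron (1\<^sub>m dQ) (bra dK (w l)) * A i k"
      by (simp add: B)
    then show "mat_adjoint (B i' (k * dK + l)) * M * B i' (k * dK + l)
        = mat_adjoint (A i k) * kron M (outer dK (w l)) * A i k"
      using mat_adjoint_mult_sandwich[OF kron_one_bra_carrier A M] sandwich_kron_one_bra[OF M]
        \<open>k \<in> {..<nK}\<close> by simp
  qed
  also have "\<dots> = kraus_adj dQ' A nK i (kron M (msum dK dK (\<lambda>l. outer dK (w l)) {..<dK}))"
    unfolding kraus_adj_def
  proof (intro msum_cong)
    fix k assume "k \<in> {..<nK}"
    then have Ak: "A i k \<in> carrier_mat (dQ * dK) dQ'" using A by simp
    show "msum dQ' dQ' (\<lambda>l. mat_adjoint (A i k) * kron M (outer dK (w l)) * A i k) {..<dK}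
        = mat_adjoint (A i k) * kron M (msum dK dK (\<lambda>l. outer dK (w l)) {..<dK}) * A i k"
      using msum_sandwich[OF mat_adjoint_carrier[OF Ak] Ak, of "{..<dK}" "\<lambda>l. kron M (outer dK (w l))"] M
      by (simp add: kron_msum_right)
  qed
  finally show ?thesis .
qed

lemma kraus_adj_one:
  assumes "\<And>k. k < nK \<Longrightarrow> K i k \<in> carrier_mat dout din"
  shows "kraus_adj din K nK i (1\<^sub>m dout) = msum din din (\<lambda>k. mat_adjoint (K i k) * K i k) {..<nK}"
  unfolding kraus_adj_def
proof (intro msum_cong)
  fix k assume "k \<in> {..<nK}"
  then show "mat_adjoint (K i k) * 1\<^sub>m dout * K i k = mat_adjoint (K i k) * K i k"
    using right_mult_one_mat[OF mat_adjoint_carrier[OF assms]] by simp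
qed

(* The outcome (i, j) is encoded as i * nJ + j and the Kraus index (k, l) as k * dK + l. *)
definition absorb_kraus ::
  "nat \<Rightarrow> nat \<Rightarrow> nat \<Rightarrow> (nat \<Rightarrow> nat \<Rightarrow> nat \<Rightarrow> nat \<Rightarrow> complex) \<Rightarrow> (nat \<Rightarrow> nat \<Rightarrow> complex mat) \<Rightarrow> nat \<Rightarrow> nat \<Rightarrow> complex mat"
  where "absorb_kraus dQ dK nJ W A i' k =
    kron (1\<^sub>m dQ) (bra dK (W (i' div nJ) (i' mod nJ) (k mod dK))) * A (i' div nJ) (k div dK)"

lemma msum_kraus_adj_kron_povm:
  assumes A: "\<And>k. k < nK \<Longrightarrow> A i k \<in> carrier_mat (dQ * dK) dQ'" and F: "povm dK F {..<nJ}"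
  shows "msum dQ' dQ' (\<lambda>j. kraus_adj dQ' A nK i (kron (1\<^sub>m dQ) (F j))) {..<nJ}
    = msum dQ' dQ' (\<lambda>k. mat_adjoint (A i k) * A i k) {..<nK}"
proof -
  have Fc: "F j \<in> carrier_mat dK dK" if "j \<in> {..<nJ}" for j
    using F that by (simp add: povm_def psd_def)
  have "msum dQ' dQ' (\<lambda>j. kraus_adj dQ' A nK i (kron (1\<^sub>m dQ) (F j))) {..<nJ}
      = kraus_adj dQ' A nK i (msum (dQ * dK) (dQ * dK) (\<lambda>j. kron (1\<^sub>m dQ) (F j)) {..<nJ})"
    by (rule kraus_adj_msum[symmetric]) (use A Fc in simp_all)
  also have "msum (dQ * dK) (dQ * dK) (\<lambda>j. kron (1\<^sub>m dQ) (F j)) {..<nJ} = 1\<^sub>m (dQ * dK)"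
    using kron_msum_right[of "{..<nJ}" F dK "1\<^sub>m dQ"] Fc F by (simp add: povm_def kron_one_one)
  also have "kraus_adj dQ' A nK i (1\<^sub>m (dQ * dK)) = msum dQ' dQ' (\<lambda>k. mat_adjoint (A i k) * A i k) {..<nK}"
    by (rule kraus_adj_one[where K = A and i = i, OF A])
  finally show ?thesis .
qed

lemma instrument_absorb_povm:
  assumes A: "instrument dQ' (dQ * dK) nI nK A"
    and W: "\<And>i j. i < nI \<Longrightarrow> j < nJ \<Longrightarrow> F i j = msum dK dK (\<lambda>l. outer dK (W i j l)) {..<dK}"
    and F: "\<And>i. i < nI \<Longrightarrow> povm dK (F i) {..<nJ}"
  shows "instrument dQ' dQ (nI * nJ) (nK * dK) (absorb_kraus dQ dK nJ W A)"
proof -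
  define B where "B = absorb_kraus dQ dK nJ W A"
  have Ac: "A i k \<in> carrier_mat (dQ * dK) dQ'" if "i < nI" "k < nK" for i k
    using A that by (simp add: instrument_def)
  have Bc: "B i' k \<in> carrier_mat dQ dQ'" if "i' < nI * nJ" "k < nK * dK" for i' k
    unfolding B_def absorb_kraus_def
    by (rule mult_carrier_mat[OF kron_one_bra_carrier Ac]) (use that in \<open>simp_all add: less_mult_imp_div_less\<close>)
  have "msum dQ' dQ' (\<lambda>(i', k). mat_adjoint (B i' k) * B i' k) ({..<nI * nJ} \<times> {..<nK * dK})
      = msum dQ' dQ' (\<lambda>i'. kraus_adj dQ' B (nK * dK) i' (1\<^sub>m dQ)) {..<nI * nJ}"
    unfolding msum_Times using Bc by (intro msum_cong kraus_adj_one[symmetric]) simp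
  also have "\<dots> = msum dQ' dQ' (\<lambda>i. msum dQ' dQ' (\<lambda>j. kraus_adj dQ' A nK i (kron (1\<^sub>m dQ) (F i j))) {..<nJ}) {..<nI}"
    unfolding msum_lessThan_mult_nat
  proof (intro msum_cong)
    fix i j assume i: "i \<in> {..<nI}" and j: "j \<in> {..<nJ}"
    have "kraus_adj dQ' B (nK * dK) (i * nJ + j) (1\<^sub>m dQ)
        = kraus_adj dQ' A nK i (kron (1\<^sub>m dQ) (msum dK dK (\<lambda>l. outer dK (W i j l)) {..<dK}))"
      by (rule kraus_adj_absorb_bra) (use Ac i j in \<open>simp_all add: B_def absorb_kraus_def\<close>)
    then show "kraus_adj dQ' B (nK * dK) (i * nJ + j) (1\<^sub>m dQ) = kraus_adj dQ' A nK i (kron (1\<^sub>m dQ) (F i j))"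
      using W i j by simp
  qed
  also have "\<dots> = msum dQ' dQ' (\<lambda>i. msum dQ' dQ' (\<lambda>k. mat_adjoint (A i k) * A i k) {..<nK}) {..<nI}"
    using Ac F by (intro msum_cong msum_kraus_adj_kron_povm) simp_all
  also have "\<dots> = msum dQ' dQ' (\<lambda>(i, k). mat_adjoint (A i k) * A i k) ({..<nI} \<times> {..<nK})"
    by (rule msum_Times[symmetric])
  also have "\<dots> = 1\<^sub>m dQ'"
    using A unfolding instrument_def by blast
  finally show ?thesis
    unfolding instrument_def B_def[symmetric] using Bc by blast
qed

lemma mtr_kraus_adj_absorb_kraus:
  assumes A: "\<And>k. k < nK \<Longrightarrow> A i k \<in> carrier_mat (dQ * dK) dQ'" and j: "j < nJ"
    and M: "M \<in> carrier_mat dQ dQ" and \<rho>: "\<rho> \<in> carrier_mat dQ' dQ'"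
  shows "mtr (kraus_adj dQ' (absorb_kraus dQ dK nJ W A) (nK * dK) (i * nJ + j) M * \<rho>)
    = mtr (kron M (msum dK dK (\<lambda>l. outer dK (W i j l)) {..<dK}) * kraus_apply (dQ * dK) A nK i \<rho>)"
proof -
  have eq: "kraus_adj dQ' (absorb_kraus dQ dK nJ W A) (nK * dK) (i * nJ + j) M
      = kraus_adj dQ' A nK i (kron M (msum dK dK (\<lambda>l. outer dK (W i j l)) {..<dK}))"
    by (rule kraus_adj_absorb_bra) (use A M j in \<open>simp_all add: absorb_kraus_def\<close>)
  show ?thesis
    unfolding eq by (intro mtr_kraus_adj_mult[where K = A, OF A _ \<rho>] kron_carrier M msum_carrier)
qed

section \<open>Classical post-processing\<close>

definition marginal :: "('m \<times> 'x \<Rightarrow> real) \<Rightarrow> 'm set \<Rightarrow> 'x \<Rightarrow> real" where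
  "marginal p S x = (\<Sum>m\<in>S. p (m, x))"

(* The q m mixed with weights proportional to w m, the posterior of the memory m; when all weights
   vanish the result is irrelevant and the uniform distribution is used. *)
definition cond_mix :: "('m \<Rightarrow> real) \<Rightarrow> 'm set \<Rightarrow> ('m \<Rightarrow> 'b::finite \<Rightarrow> real) \<Rightarrow> 'b \<Rightarrow> real" where
  "cond_mix w S q b =
    (if (\<Sum>m\<in>S. w m) = 0 then 1 / real (card (UNIV :: 'b set)) else (\<Sum>m\<in>S. w m * q m b) / (\<Sum>m\<in>S. w m))"

lemma sum_mult_cond_mix:
  assumes "finite S" "\<And>m. m \<in> S \<Longrightarrow> w m \<ge> 0"
  shows "(\<Sum>m\<in>S. w m) * cond_mix w S q b = (\<Sum>m\<in>S. w m * q m b)"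
  using assms by (simp add: cond_mix_def sum_nonneg_eq_0_iff)

lemma distr_cond_mix:
  assumes S: "finite S" and w: "\<And>m. m \<in> S \<Longrightarrow> w m \<ge> 0" and q: "\<And>m. m \<in> S \<Longrightarrow> distr (q m) UNIV"
  shows "distr (cond_mix w S q) UNIV"
proof (cases "(\<Sum>m\<in>S. w m) = 0")
  case True
  then show ?thesis by (simp add: distr_def cond_mix_def)
next
  case False
  then have pos: "(\<Sum>m\<in>S. w m) > 0"
    using w by (simp add: order_less_le sum_nonneg)
  have "(\<Sum>b\<in>UNIV. \<Sum>m\<in>S. w m * q m b) = (\<Sum>m\<in>S. w m * (\<Sum>b\<in>UNIV. q m b))"
    by (simp add: sum.swap[of _ UNIV] sum_distrib_left)
  also have "\<dots> = (\<Sum>m\<in>S. w m)"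
    using q by (simp add: distr_def)
  finally have "(\<Sum>b\<in>UNIV. \<Sum>m\<in>S. w m * q m b) = (\<Sum>m\<in>S. w m)" .
  then show ?thesis
    using pos w q False
    by (auto simp: distr_def cond_mix_def simp flip: sum_divide_distrib
        intro!: divide_nonneg_pos sum_nonneg mult_nonneg_nonneg)
qed

lemma distr_marginal: "distr p (S \<times> UNIV) \<Longrightarrow> distr (marginal p S) UNIV"
  by (auto simp: distr_def marginal_def sum.cartesian_product' sum.swap[of _ S] intro!: sum_nonneg)

lemma sum_swap_outer_inner4:
  "(\<Sum>j\<in>J. \<Sum>x\<in>X. \<Sum>a\<in>A. \<Sum>m\<in>S. g j x a m) = (\<Sum>m\<in>S. \<Sum>x\<in>X. \<Sum>a\<in>A. \<Sum>j\<in>J. g j x a m)"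
proof -
  have "(\<Sum>j\<in>J. \<Sum>x\<in>X. \<Sum>a\<in>A. \<Sum>m\<in>S. g j x a m) = (\<Sum>x\<in>X. \<Sum>a\<in>A. \<Sum>j\<in>J. \<Sum>m\<in>S. g j x a m)"
    by (subst sum.swap) (rule sum.cong[OF refl], rule sum.swap)
  also have "\<dots> = (\<Sum>x\<in>X. \<Sum>m\<in>S. \<Sum>a\<in>A. \<Sum>j\<in>J. g j x a m)"
    by (rule sum.cong[OF refl], subst sum.swap, rule sum.cong[OF refl], rule sum.swap)
  also have "\<dots> = (\<Sum>m\<in>S. \<Sum>x\<in>X. \<Sum>a\<in>A. \<Sum>j\<in>J. g j x a m)"
    by (rule sum.swap)
  finally show ?thesis .
qed

section \<open>One-way LOCC conversions\<close>

lemma pmd_carrier: "pmd d M \<Longrightarrow> M x a \<in> carrier_mat d d"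
  by (simp add: pmd_def povm_def psd_def)

lemma povm_trivial: "povm 1 (\<lambda>_ :: nat. 1\<^sub>m 1) {..<1}"
proof -
  have "outer 1 (\<lambda>_. 1) = 1\<^sub>m 1" by (intro eq_matI) auto
  moreover have "msum 1 1 (\<lambda>_ :: nat. 1\<^sub>m 1) {..<1} = 1\<^sub>m 1" by (intro eq_matI) simp_all
  ultimately show ?thesis
    using psd_outer[of 1 "\<lambda>_. 1"] by (simp add: povm_def)
qed

lemma mtr_msum_kraus_adj_mult:
  assumes "\<rho> \<in> carrier_mat d d"
  shows "mtr (msum d d (\<lambda>(r, i, x, a). complex_of_real (c r i x a) \<cdot>\<^sub>m kraus_adj d (K r) nK i (M x a))
      (R \<times> I \<times> UNIV \<times> UNIV) * \<rho>)
    = (\<Sum>r\<in>R. \<Sum>i\<in>I. \<Sum>x\<in>UNIV. \<Sum>a\<in>UNIV. complex_of_real (c r i x a) * mtr (kraus_adj d (K r) nK i (M x a) * \<rho>))"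
  using assms by (subst mtr_msum_mult)
    (auto intro!: sum.cong simp: mtr_smult_mult[of _ d d] sum.cartesian_product' simp del: UNIV_Times_UNIV)

lemma pmd_succeq_imp_oneway_LOCC_convertible:
  fixes M :: "'x::finite \<Rightarrow> 'a::finite \<Rightarrow> complex mat" and N :: "'y::finite \<Rightarrow> 'b::finite \<Rightarrow> complex mat"
  assumes M: "pmd dQ M" and succ: "pmd_succeq dQ M dQ' N"
  shows "oneway_LOCC_convertible dQ M dQ' N"
proof -
  obtain nR nI nK :: nat and \<mu> :: "nat \<Rightarrow> real" and K :: "nat \<Rightarrow> nat \<Rightarrow> nat \<Rightarrow> complex mat"
    and p :: "nat \<Rightarrow> 'y \<Rightarrow> nat \<Rightarrow> 'x \<Rightarrow> real" and q :: "'a \<Rightarrow> 'x \<Rightarrow> nat \<Rightarrow> 'y \<Rightarrow> nat \<Rightarrow> 'b \<Rightarrow> real" where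
      \<mu>: "distr \<mu> {..<nR}" and K: "\<forall>r<nR. instrument dQ' dQ nI nK (K r)"
      and p: "\<forall>i<nI. \<forall>y. \<forall>r<nR. distr (p i y r) UNIV"
      and q: "\<forall>a x. \<forall>i<nI. \<forall>y. \<forall>r<nR. distr (q a x i y r) UNIV"
      and N: "\<forall>b y. N y b = msum dQ' dQ'
          (\<lambda>(r, i, x, a). complex_of_real (\<mu> r * p i y r x * q a x i y r b) \<cdot>\<^sub>m kraus_adj dQ' (K r) nK i (M x a))
          ({..<nR} \<times> {..<nI} \<times> UNIV \<times> UNIV)"
    using succ unfolding pmd_succeq_def by (elim exE conjE) (rule that; assumption)
  have stats: "\<forall>\<rho>. density dQ' \<rho> \<longrightarrow> (\<forall>y b. mtr (N y b * \<rho>) =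
      (\<Sum>(r, i, (m, x), a, j) \<in> {..<nR} \<times> {..<nI} \<times> ({..<1 :: nat} \<times> UNIV) \<times> UNIV \<times> {..<1 :: nat}.
        complex_of_real (\<mu> r * p i y r (snd (m, x)) * q a x i y r b) *
        mtr (kron (M x a) (1\<^sub>m 1) * kraus_apply (dQ * 1) (K r) nK i \<rho>)))"
  proof (intro allI impI)
    fix \<rho> y b assume "density dQ' \<rho>"
    then have \<rho>: "\<rho> \<in> carrier_mat dQ' dQ'" by (simp add: density_def psd_def)
    have "mtr (N y b * \<rho>) = (\<Sum>r<nR. \<Sum>i<nI. \<Sum>x\<in>UNIV. \<Sum>a\<in>UNIV.
        complex_of_real (\<mu> r * p i y r x * q a x i y r b) * mtr (kraus_adj dQ' (K r) nK i (M x a) * \<rho>))"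
      unfolding N[rule_format] using \<rho> by (rule mtr_msum_kraus_adj_mult)
    also have "\<dots> = (\<Sum>r<nR. \<Sum>i<nI. \<Sum>x\<in>UNIV. \<Sum>a\<in>UNIV.
        complex_of_real (\<mu> r * p i y r x * q a x i y r b) * mtr (M x a * kraus_apply dQ (K r) nK i \<rho>))"
      using K \<rho> pmd_carrier[OF M]
      by (intro sum.cong refl) (auto simp: instrument_def mtr_kraus_adj_mult)
    finally show "mtr (N y b * \<rho>) = (\<Sum>(r, i, (m, x), a, j) \<in> {..<nR} \<times> {..<nI} \<times> ({..<1 :: nat} \<times> UNIV) \<times> UNIV \<times> {..<1 :: nat}.
        complex_of_real (\<mu> r * p i y r (snd (m, x)) * q a x i y r b) *
        mtr (kron (M x a) (1\<^sub>m 1) * kraus_apply (dQ * 1) (K r) nK i \<rho>))"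
      unfolding kron_one_1 by (simp add: sum.cartesian_product' del: UNIV_Times_UNIV)
  qed
  have facts: "\<forall>r<nR. instrument dQ' (dQ * 1) nI nK (K r)"
    "\<forall>i<nI. \<forall>y. \<forall>r<nR. distr (\<lambda>mx. p i y r (snd mx)) ({..<1 :: nat} \<times> UNIV)"
    "\<forall>r<nR. \<forall>i<nI. povm 1 (\<lambda>_ :: nat. 1\<^sub>m 1) {..<1}"
    "\<forall>a x. \<forall>m<1 :: nat. \<forall>j<1 :: nat. \<forall>i<nI. \<forall>y. \<forall>r<nR. distr (q a x i y r) UNIV"
    using K p povm_trivial q by (simp_all add: distr_def sum.cartesian_product')
  show ?thesis
    unfolding oneway_LOCC_convertible_def
    by (rule exI[of _ nR], rule exI[of _ \<mu>], rule exI[of _ nI], rule exI[of _ nK], rule exI[of _ 1],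
        rule exI[of _ K], rule exI[of _ 1], rule exI[of _ "\<lambda>i y r mx. p i y r (snd mx)"],
        rule exI[of _ 1], rule exI[of _ "\<lambda>r i j. 1\<^sub>m 1"],
        rule exI[of _ "\<lambda>a x m j i y r b. q a x i y r b"], intro conjI)
      (fact \<mu> stats facts)+
qed

lemma oneway_LOCC_stats_absorbed:
  fixes M :: "'x::finite \<Rightarrow> 'a::finite \<Rightarrow> complex mat" and nR nI nJ nm :: nat
    and \<mu> :: "nat \<Rightarrow> real" and A F :: "nat \<Rightarrow> nat \<Rightarrow> nat \<Rightarrow> complex mat"
    and p :: "nat \<Rightarrow> 'y \<Rightarrow> nat \<Rightarrow> nat \<times> 'x \<Rightarrow> real"
    and q :: "'a \<Rightarrow> 'x \<Rightarrow> nat \<Rightarrow> nat \<Rightarrow> nat \<Rightarrow> 'y \<Rightarrow> nat \<Rightarrow> 'b::finite \<Rightarrow> real"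
  assumes M: "pmd dQ M" and \<rho>: "\<rho> \<in> carrier_mat dQ' dQ'"
    and A: "\<forall>r<nR. instrument dQ' (dQ * dK) nI nK (A r)"
    and W: "\<And>r i j. r < nR \<Longrightarrow> i < nI \<Longrightarrow> j < nJ \<Longrightarrow> F r i j = msum dK dK (\<lambda>l. outer dK (W r i j l)) {..<dK}"
    and p: "\<forall>i<nI. \<forall>r<nR. distr (p i y r) ({..<nm} \<times> UNIV)"
  shows "(\<Sum>(r, i, (m, x), a, j) \<in> {..<nR} \<times> {..<nI} \<times> ({..<nm} \<times> UNIV) \<times> UNIV \<times> {..<nJ}.
      complex_of_real (\<mu> r * p i y r (m, x) * q a x m j i y r b) *
      mtr (kron (M x a) (F r i j) * kraus_apply (dQ * dK) (A r) nK i \<rho>))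
    = (\<Sum>r<nR. \<Sum>i'<nI * nJ. \<Sum>x\<in>UNIV. \<Sum>a\<in>UNIV.
      complex_of_real (\<mu> r * marginal (p (i' div nJ) y r) {..<nm} x *
        cond_mix (\<lambda>m. p (i' div nJ) y r (m, x)) {..<nm} (\<lambda>m. q a x m (i' mod nJ) (i' div nJ) y r) b) *
      mtr (kraus_adj dQ' (absorb_kraus dQ dK nJ (W r) (A r)) (nK * dK) i' (M x a) * \<rho>))"
    (is "?LOCC = ?absorbed")
proof -
  define T where "T r i j x a = mtr (kron (M x a) (F r i j) * kraus_apply (dQ * dK) (A r) nK i \<rho>)" for r i j x a
  have "?LOCC = (\<Sum>r<nR. \<Sum>i<nI. \<Sum>m<nm. \<Sum>x\<in>UNIV. \<Sum>a\<in>UNIV. \<Sum>j<nJ.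
      complex_of_real (\<mu> r * p i y r (m, x) * q a x m j i y r b) * T r i j x a)"
    by (simp add: T_def sum.cartesian_product' del: UNIV_Times_UNIV)
  also have "\<dots> = (\<Sum>r<nR. \<Sum>i<nI. \<Sum>j<nJ. \<Sum>x\<in>UNIV. \<Sum>a\<in>UNIV. \<Sum>m<nm.
      complex_of_real (\<mu> r * p i y r (m, x) * q a x m j i y r b) * T r i j x a)"
    by (rule sum.cong[OF refl], rule sum.cong[OF refl], rule sum_swap_outer_inner4[symmetric])
  also have "\<dots> = ?absorbed"
    unfolding sum_lessThan_mult_nat
  proof (intro sum.cong refl)
    fix r i j x a assume "r \<in> {..<nR}" "i \<in> {..<nI}" "j \<in> {..<nJ}"
    then have r: "r < nR" and i: "i < nI" and j: "j < nJ" by simp_all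
    have nonneg: "0 \<le> p i y r (m, x)" if "m \<in> {..<nm}" for m
      using p r i that by (simp add: distr_def)
    have "(\<Sum>m<nm. p i y r (m, x)) * cond_mix (\<lambda>m. p i y r (m, x)) {..<nm} (\<lambda>m. q a x m j i y r) b
        = (\<Sum>m<nm. p i y r (m, x) * q a x m j i y r b)"
      by (rule sum_mult_cond_mix) (simp_all add: nonneg)
    then have coeff: "\<mu> r * marginal (p i y r) {..<nm} x * cond_mix (\<lambda>m. p i y r (m, x)) {..<nm} (\<lambda>m. q a x m j i y r) b
        = (\<Sum>m<nm. \<mu> r * p i y r (m, x) * q a x m j i y r b)"
      unfolding marginal_def mult.assoc by (simp add: sum_distrib_left)
    have "A r i k \<in> carrier_mat (dQ * dK) dQ'" if "k < nK" for k
      using A r i that by (simp add: instrument_def)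
    then have "mtr (kraus_adj dQ' (absorb_kraus dQ dK nJ (W r) (A r)) (nK * dK) (i * nJ + j) (M x a) * \<rho>) = T r i j x a"
      using mtr_kraus_adj_absorb_kraus[where A = "A r", OF _ j pmd_carrier[OF M] \<rho>] W[OF r i j]
      by (simp add: T_def)
    moreover have "(i * nJ + j) div nJ = i" "(i * nJ + j) mod nJ = j" using j by simp_all
    ultimately show "(\<Sum>m<nm. complex_of_real (\<mu> r * p i y r (m, x) * q a x m j i y r b) * T r i j x a)
      = complex_of_real (\<mu> r * marginal (p ((i * nJ + j) div nJ) y r) {..<nm} x *
          cond_mix (\<lambda>m. p ((i * nJ + j) div nJ) y r (m, x)) {..<nm}
            (\<lambda>m. q a x m ((i * nJ + j) mod nJ) ((i * nJ + j) div nJ) y r) b) *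
        mtr (kraus_adj dQ' (absorb_kraus dQ dK nJ (W r) (A r)) (nK * dK) (i * nJ + j) (M x a) * \<rho>)"
      by (simp only: coeff of_real_sum sum_distrib_right)
  qed
  finally show ?thesis .
qed

lemma oneway_LOCC_convertible_imp_pmd_succeq:
  fixes M :: "'x::finite \<Rightarrow> 'a::finite \<Rightarrow> complex mat" and N :: "'y::finite \<Rightarrow> 'b::finite \<Rightarrow> complex mat"
  assumes M: "pmd dQ M" and N: "pmd dQ' N" and conv: "oneway_LOCC_convertible dQ M dQ' N"
  shows "pmd_succeq dQ M dQ' N"
proof -
  obtain nR nI nK dK nm nJ :: nat and \<mu> :: "nat \<Rightarrow> real" and A F :: "nat \<Rightarrow> nat \<Rightarrow> nat \<Rightarrow> complex mat"
    and p :: "nat \<Rightarrow> 'y \<Rightarrow> nat \<Rightarrow> nat \<times> 'x \<Rightarrow> real"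
    and q :: "'a \<Rightarrow> 'x \<Rightarrow> nat \<Rightarrow> nat \<Rightarrow> nat \<Rightarrow> 'y \<Rightarrow> nat \<Rightarrow> 'b \<Rightarrow> real" where
      \<mu>: "distr \<mu> {..<nR}" and A: "\<forall>r<nR. instrument dQ' (dQ * dK) nI nK (A r)"
      and p: "\<forall>i<nI. \<forall>y. \<forall>r<nR. distr (p i y r) ({..<nm} \<times> UNIV)"
      and F: "\<forall>r<nR. \<forall>i<nI. povm dK (F r i) {..<nJ}"
      and q: "\<forall>a x. \<forall>m<nm. \<forall>j<nJ. \<forall>i<nI. \<forall>y. \<forall>r<nR. distr (q a x m j i y r) UNIV"
      and stats: "\<forall>\<rho>. density dQ' \<rho> \<longrightarrow> (\<forall>y b. mtr (N y b * \<rho>) =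
         (\<Sum>(r, i, (m, x), a, j) \<in> {..<nR} \<times> {..<nI} \<times> ({..<nm} \<times> UNIV) \<times> UNIV \<times> {..<nJ}.
            complex_of_real (\<mu> r * p i y r (m, x) * q a x m j i y r b) *
            mtr (kron (M x a) (F r i j) * kraus_apply (dQ * dK) (A r) nK i \<rho>)))"
    using conv unfolding oneway_LOCC_convertible_def by (elim exE conjE) (rule that; assumption)
  have "\<forall>r i j. \<exists>ws. r < nR \<longrightarrow> i < nI \<longrightarrow> j < nJ \<longrightarrow> F r i j = msum dK dK (\<lambda>l. outer dK (ws l)) {..<dK}"
    using F psd_eq_msum_outer by (simp add: povm_def)
  then obtain W where W: "\<And>r i j. r < nR \<Longrightarrow> i < nI \<Longrightarrow> j < nJ \<Longrightarrow>
      F r i j = msum dK dK (\<lambda>l. outer dK (W r i j l)) {..<dK}"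
    by metis
  define K where "K r = absorb_kraus dQ dK nJ (W r) (A r)" for r
  define p' where "p' i' y r = marginal (p (i' div nJ) y r) {..<nm}" for i' y r
  define q' where "q' a x i' y r = cond_mix (\<lambda>m. p (i' div nJ) y r (m, x)) {..<nm} (\<lambda>m. q a x m (i' mod nJ) (i' div nJ) y r)"
    for a x i' y r
  have "\<forall>r<nR. instrument dQ' dQ (nI * nJ) (nK * dK) (K r)"
  proof (intro allI impI)
    fix r assume "r < nR"
    then show "instrument dQ' dQ (nI * nJ) (nK * dK) (K r)"
      unfolding K_def using A W F by (intro instrument_absorb_povm[where F = "F r"]) simp_all
  qed
  moreover have "\<forall>i'<nI * nJ. \<forall>y. \<forall>r<nR. distr (p' i' y r) UNIV"
    unfolding p'_def using p by (auto intro!: distr_marginal simp: less_mult_imp_div_less)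
  moreover have "\<forall>a x. \<forall>i'<nI * nJ. \<forall>y. \<forall>r<nR. distr (q' a x i' y r) UNIV"
  proof (intro allI impI)
    fix a x i' y r assume i': "i' < nI * nJ" and r: "r < nR"
    then have "nJ > 0" by (cases nJ) simp_all
    with i' have "i' div nJ < nI" "i' mod nJ < nJ" by (simp_all add: less_mult_imp_div_less)
    then show "distr (q' a x i' y r) UNIV"
      unfolding q'_def using p q r by (intro distr_cond_mix) (simp_all add: distr_def)
  qed
  moreover have "N y b = msum dQ' dQ'
      (\<lambda>(r, i', x, a). complex_of_real (\<mu> r * p' i' y r x * q' a x i' y r b) \<cdot>\<^sub>m kraus_adj dQ' (K r) (nK * dK) i' (M x a))
      ({..<nR} \<times> {..<nI * nJ} \<times> UNIV \<times> UNIV)"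
    (is "_ = ?R y b") for y b
  proof (rule eq_mat_of_mtr_density_eq)
    fix \<rho> assume dens: "density dQ' \<rho>"
    then have \<rho>: "\<rho> \<in> carrier_mat dQ' dQ'" by (simp add: density_def psd_def)
    have p_y: "\<forall>i<nI. \<forall>r<nR. distr (p i y r) ({..<nm} \<times> UNIV)"
      using p by blast
    show "mtr (N y b * \<rho>) = mtr (?R y b * \<rho>)"
      unfolding mtr_msum_kraus_adj_mult[OF \<rho>] K_def p'_def q'_def
      by (rule trans[OF stats[rule_format, OF dens]])
        (rule oneway_LOCC_stats_absorbed[where A = A and F = F and W = W and p = p and y = y, OF M \<rho> A W p_y])
  qed (use pmd_carrier[OF N] in simp_all)
  ultimately show ?thesis
    unfolding pmd_succeq_def using \<mu> by blast
qed

theorem proposition1: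
  fixes M :: "'x::finite \<Rightarrow> 'a::finite \<Rightarrow> complex mat"
    and N :: "'y::finite \<Rightarrow> 'b::finite \<Rightarrow> complex mat"
    and dQ dQ' :: nat
  assumes "pmd dQ M" and "pmd dQ' N"
  shows "pmd_succeq dQ M dQ' N \<longleftrightarrow> oneway_LOCC_convertible dQ M dQ' N"
  using pmd_succeq_imp_oneway_LOCC_convertible oneway_LOCC_convertible_imp_pmd_succeq assms by blast

end
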